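(* Let $n\ge k\ge 1$ and let $\lambda=(\lambda_1,\ldots,\lambda_k)$ be a partition with $\lambda_1\ge\lambda_2\ge\cdots\ge\lambda_k\ge 0$ and $\lambda_1\le n-k$, and set $\lambda_{k+1}:=0$. Then the weight generating function $P_\lambda(\alpha,\beta)=\sum_T \mathrm{wt}(T)$, summed over all Condensed Catalan tableaux $T$ of size $(k,n)$ and shape $\lambda$, equals $$P_\lambda(\alpha,\beta)=\alpha^k\beta^{n-k}\det\big(A_{ij}\big)_{1\le i,j\le k},$$ where $$A_{ij}=\beta^{j-i}\alpha^{\lambda_i-\lambda_{j+1}}\left(\binom{\lambda_{j+1}}{j-i}+\beta\binom{\lambda_{j+1}}{j-i+1}\right)+\beta^{j-i}\alpha^{\lambda_i-\lambda_j}\sum_{\ell=0}^{\lambda_j-\lambda_{j+1}-1}\alpha^{\ell}\left(\binom{\lambda_j-\ell-1}{j-i-1}+\beta\binom{\lambda_j-\ell-1}{j-i}\right).$$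
   Context: Binomial coefficients $\binom{a}{b}$ (here always with $a\ge 0$) are $0$ when $b<0$ or $b>a$; an empty sum is $0$. The Young diagram of $\lambda$ (English convention) consists of boxes $(r,c)$ with $1\le r\le k$, $1\le c\le\lambda_r$ (row 1 on top, column 1 leftmost), viewed inside a $k\times(n-k)$ rectangle. A Condensed Catalan tableau of size $(k,n)$ and shape $\lambda$ is an assignment to each box of one of $\alpha$, $\beta$, or empty, such that: (ii) if box $(r,c)$ contains $\beta$, every box $(r,c')$ with $c'<c$ is empty; (iii) if box $(r,c)$ contains $\alpha$, every box $(r',c)$ with $r'<r$ is empty; (iv) every box $(r,c)$ such that there is no $\alpha$ in any box $(r',c)$ with $r'>r$ and no $\beta$ in any box $(r,c')$ with $c'>c$ contains $\alpha$ or $\beta$. Its weight is $\mathrm{wt}(T)=\alpha^{k+a}\beta^{n-k+b}$, where $a$ and $b$ are the numbers of $\alpha$'s and $\beta$'s in the filling. *)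

theory Defs
  imports Complex_Main "Jordan_Normal_Form.Determinant"
begin

datatype cell = Alpha | Beta | Empty

definition boxes :: "nat \<Rightarrow> (nat \<Rightarrow> nat) \<Rightarrow> (nat \<times> nat) set" where
  "boxes k lam = {(r, c). 1 \<le> r \<and> r \<le> k \<and> 1 \<le> c \<and> c \<le> lam r}"

definition is_CCT :: "nat \<Rightarrow> (nat \<Rightarrow> nat) \<Rightarrow> (nat \<times> nat \<Rightarrow> cell) \<Rightarrow> bool" where
  "is_CCT k lam T \<longleftrightarrow>
     (\<forall>x. x \<notin> boxes k lam \<longrightarrow> T x = Empty) \<and>
     (\<forall>r c. (r, c) \<in> boxes k lam \<longrightarrow> T (r, c) = Beta \<longrightarrow>
        (\<forall>c'. 1 \<le> c' \<and> c' < c \<longrightarrow> T (r, c') = Empty)) \<and>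
     (\<forall>r c. (r, c) \<in> boxes k lam \<longrightarrow> T (r, c) = Alpha \<longrightarrow>
        (\<forall>r'. 1 \<le> r' \<and> r' < r \<longrightarrow> T (r', c) = Empty)) \<and>
     (\<forall>r c. (r, c) \<in> boxes k lam \<longrightarrow>
        (\<not> (\<exists>r'. r' > r \<and> (r', c) \<in> boxes k lam \<and> T (r', c) = Alpha)) \<longrightarrow>
        (\<not> (\<exists>c'. c' > c \<and> (r, c') \<in> boxes k lam \<and> T (r, c') = Beta)) \<longrightarrow>
        T (r, c) \<noteq> Empty)"

definition num_alpha :: "nat \<Rightarrow> (nat \<Rightarrow> nat) \<Rightarrow> (nat \<times> nat \<Rightarrow> cell) \<Rightarrow> nat" where
  "num_alpha k lam T = card {x \<in> boxes k lam. T x = Alpha}"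

definition num_beta :: "nat \<Rightarrow> (nat \<Rightarrow> nat) \<Rightarrow> (nat \<times> nat \<Rightarrow> cell) \<Rightarrow> nat" where
  "num_beta k lam T = card {x \<in> boxes k lam. T x = Beta}"

definition wt :: "nat \<Rightarrow> nat \<Rightarrow> (nat \<Rightarrow> nat) \<Rightarrow> real \<Rightarrow> real \<Rightarrow> (nat \<times> nat \<Rightarrow> cell) \<Rightarrow> real" where
  "wt n k lam a b T = a ^ (k + num_alpha k lam T) * b ^ (n - k + num_beta k lam T)"

definition P_gen :: "nat \<Rightarrow> nat \<Rightarrow> (nat \<Rightarrow> nat) \<Rightarrow> real \<Rightarrow> real \<Rightarrow> real" where
  "P_gen n k lam a b = (\<Sum>T\<in>{T. is_CCT k lam T}. wt n k lam a b T)"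

definition cbinom :: "nat \<Rightarrow> int \<Rightarrow> real" where
  "cbinom a b = (if b < 0 then 0 else real (a choose nat b))"

definition Aentry :: "(nat \<Rightarrow> nat) \<Rightarrow> real \<Rightarrow> real \<Rightarrow> nat \<Rightarrow> nat \<Rightarrow> real" where
  "Aentry lam a b i j =
     b powi (int j - int i) * a powi (int (lam i) - int (lam (j + 1))) *
       (cbinom (lam (j + 1)) (int j - int i) + b * cbinom (lam (j + 1)) (int j - int i + 1))
   + b powi (int j - int i) * a powi (int (lam i) - int (lam j)) *
       (\<Sum>l<lam j - lam (j + 1).
          a ^ l * (cbinom (lam j - l - 1) (int j - int i - 1) + b * cbinom (lam j - l - 1) (int j - int i)))"

end

theory Submission
  imports Defs
begin

text \<open>
  Let \<open>Q(\<lambda>)\<close> be the sum of \<open>\<alpha>\<^sup>a \<beta>\<^sup>b\<close> over the tableaux of shape \<open>\<lambda>\<close>, so that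
  \<open>P\<^sub>\<lambda> = \<alpha>\<^sup>k \<beta>\<^sup>n\<^sup>-\<^sup>k Q(\<lambda>)\<close>.  Let \<open>h\<close> be the last row of maximal length \<open>M = \<lambda>\<^sub>1\<close>.  Condition (iv)
  forces the box \<open>(h, M)\<close> to be filled.  If it holds \<open>\<alpha>\<close>, the column above it is empty, and
  removing column \<open>M\<close> leaves a tableau of the shape with rows \<open>1..h\<close> shortened by one; if it holds
  \<open>\<beta>\<close>, the rest of row \<open>h\<close> is empty, and deleting that row leaves a tableau with \<open>k - 1\<close> rows.
  So \<open>Q(\<lambda>) = \<beta> Q(\<lambda> without row h) + \<alpha> Q(\<lambda> without column M)\<close>, and \<open>Q\<close> of the empty shape is 1.

  The determinant is reached through the chain sum: the sum over \<open>v\<^sub>1 \<ge> \<dots> \<ge> v\<^sub>k \<ge> 0\<close> with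
  \<open>v\<^sub>i \<le> \<lambda>\<^sub>i\<close> of a product of row weights.  It satisfies the same recurrence, and
  inclusion--exclusion over the violated constraints \<open>v\<^sub>i\<^sub>+\<^sub>1 \<le> v\<^sub>i\<close> expands it as
  \<open>\<Sum>\<^sub>j (-1)\<^sup>j A\<^sub>1\<^sub>,\<^sub>j\<^sub>+\<^sub>1\<close> times the chain sum of \<open>(\<lambda>\<^sub>j\<^sub>+\<^sub>2, \<lambda>\<^sub>j\<^sub>+\<^sub>3, \<dots>)\<close>, which is the
  expansion of the Hessenberg determinant \<open>det A\<close> along its first row.
\<close>

section \<open>Chain sums\<close>

definition row_weight :: "real \<Rightarrow> real \<Rightarrow> nat \<Rightarrow> nat \<Rightarrow> nat \<Rightarrow> real" where
  "row_weight a b l l' v = (if 0 < v then b else 1) * a ^ (l - max v l')"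

fun chain_sum :: "real \<Rightarrow> real \<Rightarrow> nat \<Rightarrow> (nat \<Rightarrow> nat) \<Rightarrow> nat \<Rightarrow> real" where
  "chain_sum a b 0 lam x = 1"
| "chain_sum a b (Suc k) lam x =
     (\<Sum>v\<le>min x (lam 1). row_weight a b (lam 1) (lam 2) v * chain_sum a b k (\<lambda>i. lam (Suc i)) v)"

definition chain_total :: "real \<Rightarrow> real \<Rightarrow> nat \<Rightarrow> (nat \<Rightarrow> nat) \<Rightarrow> real" where
  "chain_total a b k lam = chain_sum a b k lam (lam 1)"

text \<open>\<open>ascent_sum a b j G N mu\<close> sums \<open>G y\<^sub>0 \<cdot> \<Prod> row_weight\<close> over the strictly increasing chains
  \<open>y\<^sub>0 < y\<^sub>1 < \<dots> < y\<^sub>j\<close> with \<open>y\<^sub>0 \<le> N\<close> and \<open>y\<^sub>i \<le> mu i\<close>: the chains violating the first \<open>j\<close> constraints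
  of a chain sum.\<close>
fun ascent_sum :: "real \<Rightarrow> real \<Rightarrow> nat \<Rightarrow> (nat \<Rightarrow> real) \<Rightarrow> nat \<Rightarrow> (nat \<Rightarrow> nat) \<Rightarrow> real" where
  "ascent_sum a b 0 G N mu = (\<Sum>y\<le>N. G y)"
| "ascent_sum a b (Suc j) G N mu =
     ascent_sum a b j (\<lambda>z. (\<Sum>y<min (Suc N) z. G y) * row_weight a b (mu 1) (mu 2) z)
       (mu 1) (\<lambda>i. mu (Suc i))"

lemma chain_sum_eq_chain_total: "lam 1 \<le> x \<Longrightarrow> chain_sum a b k lam x = chain_total a b k lam"
  unfolding chain_total_def by (cases k) (auto simp: min_def)

lemma chain_sum_Suc_complement:
  "chain_sum a b (Suc k) lam y = chain_total a b (Suc k) lam -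
     (\<Sum>z\<le>lam 1. if y < z then row_weight a b (lam 1) (lam 2) z * chain_sum a b k (\<lambda>i. lam (Suc i)) z
                  else 0)"
proof -
  let ?F = "\<lambda>z. row_weight a b (lam 1) (lam 2) z * chain_sum a b k (\<lambda>i. lam (Suc i)) z"
  have "chain_total a b (Suc k) lam =
      (\<Sum>z\<le>lam 1. if y < z then ?F z else 0) + (\<Sum>z\<le>lam 1. if y < z then 0 else ?F z)"
    by (simp add: chain_total_def sum.distrib[symmetric] if_distrib cong: if_cong)
  also have "(\<Sum>z\<le>lam 1. if y < z then 0 else ?F z) = (\<Sum>z\<le>min y (lam 1). ?F z)"
    by (rule sum.mono_neutral_cong_right) auto
  finally show ?thesis by simp
qed

lemma chain_sum_ascent_expansion:
  "(\<Sum>y\<le>N. G y * chain_sum a b k mu y) =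
   (\<Sum>j\<le>k. (-1)^j * ascent_sum a b j G N mu * chain_total a b (k - j) (\<lambda>i. mu (i + j)))"
proof (induction k arbitrary: G N mu)
  case 0
  then show ?case by (simp add: chain_total_def sum_distrib_right)
next
  case (Suc k)
  let ?F = "\<lambda>z. row_weight a b (mu 1) (mu 2) z * chain_sum a b k (\<lambda>i. mu (Suc i)) z"
  let ?G' = "\<lambda>z. (\<Sum>y<min (Suc N) z. G y) * row_weight a b (mu 1) (mu 2) z"
  have inner: "(\<Sum>y\<le>N. G y * (if y < z then ?F z else 0)) = ?G' z * chain_sum a b k (\<lambda>i. mu (Suc i)) z"
    for z
  proof -
    have "(\<Sum>y\<le>N. G y * (if y < z then ?F z else 0)) = (\<Sum>y<min (Suc N) z. G y * ?F z)"
      by (rule sum.mono_neutral_cong_right) auto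
    then show ?thesis by (simp add: sum_distrib_right mult.assoc)
  qed
  have "(\<Sum>y\<le>N. G y * chain_sum a b (Suc k) mu y) =
      (\<Sum>y\<le>N. G y) * chain_total a b (Suc k) mu
      - (\<Sum>z\<le>mu 1. \<Sum>y\<le>N. G y * (if y < z then ?F z else 0))"
    by (simp only: chain_sum_Suc_complement[of a b k mu] right_diff_distrib sum_subtractf
        sum_distrib_right sum_distrib_left sum.swap[of _ "{..N}"])
  also have "\<dots> = ascent_sum a b 0 G N mu * chain_total a b (Suc k) mu
      - (\<Sum>j\<le>k. (-1)^j * ascent_sum a b (Suc j) G N mu * chain_total a b (k - j) (\<lambda>i. mu (i + Suc j)))"
    using Suc.IH[where G="?G'" and N="mu 1" and mu="\<lambda>i. mu (Suc i)"] by (simp add: inner)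
  also have "\<dots> = (\<Sum>j\<le>Suc k. (-1)^j * ascent_sum a b j G N mu * chain_total a b (Suc k - j) (\<lambda>i. mu (i + j)))"
    by (subst sum.atMost_Suc_shift) (simp add: sum_negf[symmetric])
  finally show ?case .
qed

section \<open>Evaluating the ascent sums\<close>

definition pascal_pair :: "real \<Rightarrow> nat \<Rightarrow> nat \<Rightarrow> real" where
  "pascal_pair b s z = (if z = 0 then (if s = 0 then 1 else 0)
                        else cbinom (z - 1) (int s - 1) + b * cbinom (z - 1) (int s))"

lemma cbinom_Suc: "cbinom (Suc z) t = cbinom z t + cbinom z (t - 1)"
proof (cases "t \<le> 0")
  case True
  then show ?thesis by (cases "t = 0") (auto simp: cbinom_def)
next
  case False
  then obtain m where "nat t = Suc m" "nat (t - 1) = m" by (cases "nat t") auto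
  with False show ?thesis by (simp add: cbinom_def)
qed

lemma cbinom_0: "cbinom 0 t = (if t = 0 then 1 else 0)"
  by (auto simp: cbinom_def)

lemma sum_pascal_pair: "(\<Sum>y<z. pascal_pair b s y) = pascal_pair b (Suc s) z"
proof (induction z)
  case 0
  then show ?case by (simp add: pascal_pair_def)
next
  case (Suc z)
  have "pascal_pair b (Suc s) z + pascal_pair b s z = pascal_pair b (Suc s) (Suc z)"
  proof (cases z)
    case 0
    then show ?thesis by (cases s) (auto simp: pascal_pair_def cbinom_0)
  next
    case (Suc z')
    then show ?thesis by (simp add: pascal_pair_def cbinom_Suc[of z'] algebra_simps)
  qed
  with Suc show ?case by simp
qed

lemma ascent_sum_cong:
  "(\<And>y. y \<le> N \<Longrightarrow> G y = G' y) \<Longrightarrow> ascent_sum a b j G N mu = ascent_sum a b j G' N mu"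
proof (induction j arbitrary: G G' N mu)
  case 0
  then show ?case by simp
next
  case (Suc j)
  have "(\<lambda>z. (\<Sum>y<min (Suc N) z. G y) * row_weight a b (mu 1) (mu 2) z) =
        (\<lambda>z. (\<Sum>y<min (Suc N) z. G' y) * row_weight a b (mu 1) (mu 2) z)"
    using Suc.prems by (intro ext) (auto intro!: sum.cong)
  then show ?case by simp
qed

text \<open>The integrand of the ascent sums for \<open>lam\<close> after \<open>s\<close> steps.\<close>
definition ascent_density :: "real \<Rightarrow> real \<Rightarrow> (nat \<Rightarrow> nat) \<Rightarrow> nat \<Rightarrow> nat \<Rightarrow> real" where
  "ascent_density a b lam s z = b ^ s * a ^ (lam 1 - max z (lam (s + 2))) * pascal_pair b s z"

lemma sum_greaterThanAtMost_reverse: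
  fixes f :: "nat \<Rightarrow> 'a::comm_monoid_add"
  assumes "L \<le> U"
  shows "(\<Sum>z\<in>{L<..U}. f z) = (\<Sum>l<U - L. f (U - l))"
  by (rule sum.reindex_bij_witness[where i="\<lambda>z. U - z" and j="\<lambda>l. U - l"]) (use assms in auto)

lemma sum_ascent_density:
  assumes "lam (s + 2) \<le> lam (s + 1)" and "lam (s + 1) \<le> lam 1"
  shows "(\<Sum>z\<le>lam (s + 1). ascent_density a b lam s z) = Aentry lam a b 1 (s + 1)"
proof -
  define L U W where "L = lam (s + 2)" and "U = lam (s + 1)" and "W = lam 1"
  have LU: "L \<le> U" and UW: "U \<le> W" using assms by (simp_all add: L_def U_def W_def)
  have density: "ascent_density a b lam s z = b ^ s * a ^ (W - max z L) * pascal_pair b s z" for z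
    by (simp add: ascent_density_def W_def L_def)
  have split: "{..U} = {..L} \<union> {L<..U}" using LU by auto
  have "(\<Sum>z\<le>U. ascent_density a b lam s z) =
      (\<Sum>z\<le>L. ascent_density a b lam s z) + (\<Sum>z\<in>{L<..U}. ascent_density a b lam s z)"
    unfolding split by (rule sum.union_disjoint) auto
  also have "(\<Sum>z\<le>L. ascent_density a b lam s z) = b ^ s * a ^ (W - L) * (\<Sum>z<Suc L. pascal_pair b s z)"
    unfolding sum_distrib_left lessThan_Suc_atMost by (rule sum.cong) (auto simp: density)
  also have "(\<Sum>z<Suc L. pascal_pair b s z) = cbinom L (int s) + b * cbinom L (int s + 1)"
    by (simp only: sum_pascal_pair) (simp add: pascal_pair_def ac_simps)
  also have "(\<Sum>z\<in>{L<..U}. ascent_density a b lam s z) = (\<Sum>l<U - L. ascent_density a b lam s (U - l))"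
    by (rule sum_greaterThanAtMost_reverse[OF LU])
  also have "\<dots> = b ^ s * a ^ (W - U) *
      (\<Sum>l<U - L. a ^ l * (cbinom (U - l - 1) (int s - 1) + b * cbinom (U - l - 1) (int s)))"
    unfolding sum_distrib_left
  proof (rule sum.cong[OF refl])
    fix l assume "l \<in> {..<U - L}"
    then have "max (U - l) L = U - l" "W - (U - l) = (W - U) + l" "U - l \<noteq> 0" using LU UW by auto
    then show "ascent_density a b lam s (U - l) = b ^ s * a ^ (W - U) *
        (a ^ l * (cbinom (U - l - 1) (int s - 1) + b * cbinom (U - l - 1) (int s)))"
      unfolding density by (simp add: pascal_pair_def power_add)
  qed
  also have "b ^ s * a ^ (W - L) * (cbinom L (int s) + b * cbinom L (int s + 1)) + \<dots> =
      Aentry lam a b 1 (s + 1)"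
  proof -
    have "lam (s + 1 + 1) = L" "lam (s + 1) = U" "lam 1 = W" by (simp_all add: L_def U_def W_def)
    moreover have "int W - int L = int (W - L)" "int W - int U = int (W - U)" using LU UW by auto
    moreover have "int (s + 1) - int 1 = int s" by simp
    ultimately show ?thesis unfolding Aentry_def by (simp only: power_int_of_nat)
  qed
  finally show ?thesis by (simp add: U_def)
qed

lemma ascent_density_Suc:
  assumes "z \<le> L2" "L2 \<le> U" "L3 \<le> L2" "L2 \<le> lam 1" "L2 = lam (s + 2)"
  shows "(\<Sum>y<min (Suc U) z. ascent_density a b lam s y) * row_weight a b L2 L3 z =
    b ^ Suc s * a ^ (lam 1 - max z L3) * pascal_pair b (Suc s) z"
proof -
  have "(\<Sum>y<min (Suc U) z. ascent_density a b lam s y) = (\<Sum>y<z. b ^ s * a ^ (lam 1 - L2) * pascal_pair b s y)"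
    using assms by (intro sum.cong) (auto simp: ascent_density_def max_def)
  also have "\<dots> = b ^ s * a ^ (lam 1 - L2) * pascal_pair b (Suc s) z"
    by (simp add: sum_distrib_left[symmetric] sum_pascal_pair)
  finally have partial: "(\<Sum>y<min (Suc U) z. ascent_density a b lam s y) =
      b ^ s * a ^ (lam 1 - L2) * pascal_pair b (Suc s) z" .
  show ?thesis
  proof (cases "z = 0")
    case True
    then show ?thesis using partial by (simp add: pascal_pair_def)
  next
    case False
    have "lam 1 - max z L3 = (lam 1 - L2) + (L2 - max z L3)" using assms by simp
    then show ?thesis using partial False by (simp add: row_weight_def power_add)
  qed
qed

lemma ascent_sum_eq_Aentry:
  assumes "\<And>i j. 1 \<le> i \<Longrightarrow> i \<le> j \<Longrightarrow> j \<le> s + t + 2 \<Longrightarrow> lam j \<le> lam i"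
  shows "ascent_sum a b t (ascent_density a b lam s) (lam (s + 1)) (\<lambda>i. lam (i + (s + 1))) =
    Aentry lam a b 1 (s + t + 1)"
  using assms
proof (induction t arbitrary: s)
  case 0
  then show ?case using sum_ascent_density[of lam s a b] by simp
next
  case (Suc t)
  have dec: "lam (s + 2) \<le> lam (s + 1)" "lam (s + 3) \<le> lam (s + 2)" "lam (s + 2) \<le> lam 1"
    using Suc.prems by auto
  have "ascent_sum a b (Suc t) (ascent_density a b lam s) (lam (s + 1)) (\<lambda>i. lam (i + (s + 1))) =
      ascent_sum a b t
        (\<lambda>z. (\<Sum>y<min (Suc (lam (s + 1))) z. ascent_density a b lam s y) *
               row_weight a b (lam (s + 2)) (lam (s + 3)) z)
        (lam (Suc s + 1)) (\<lambda>i. lam (i + (Suc s + 1)))"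
    by (simp add: numeral_eq_Suc add.commute)
  also have "\<dots> = ascent_sum a b t (ascent_density a b lam (Suc s)) (lam (Suc s + 1))
      (\<lambda>i. lam (i + (Suc s + 1)))"
    by (rule ascent_sum_cong)
      (use ascent_density_Suc[of _ "lam (s + 2)" "lam (s + 1)" "lam (s + 3)" lam s a b] dec
        in \<open>simp add: ascent_density_def numeral_eq_Suc\<close>)
  also have "\<dots> = Aentry lam a b 1 (Suc s + t + 1)"
    by (rule Suc.IH) (use Suc.prems in auto)
  finally show ?case by simp
qed

lemma chain_total_first_row_expansion:
  assumes "\<And>i j. 1 \<le> i \<Longrightarrow> i \<le> j \<Longrightarrow> j \<le> m + 2 \<Longrightarrow> lam j \<le> lam i"
  shows "chain_total a b (Suc m) lam =
    (\<Sum>j\<le>m. (-1)^j * Aentry lam a b 1 (j + 1) * chain_total a b (m - j) (\<lambda>i. lam (i + (j + 1))))"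
proof -
  have first_row: "row_weight a b (lam 1) (lam 2) = ascent_density a b lam 0"
    by (intro ext) (simp add: row_weight_def ascent_density_def pascal_pair_def cbinom_def numeral_2_eq_2)
  have ascent: "ascent_sum a b j (ascent_density a b lam 0) (lam 1) (\<lambda>i. lam (Suc i)) = Aentry lam a b 1 (j + 1)"
    if "j \<le> m" for j
    using ascent_sum_eq_Aentry[of 0 j lam a b] that assms by simp
  have "chain_total a b (Suc m) lam =
      (\<Sum>v\<le>lam 1. row_weight a b (lam 1) (lam 2) v * chain_sum a b m (\<lambda>i. lam (Suc i)) v)"
    by (simp add: chain_total_def)
  also have "\<dots> = (\<Sum>j\<le>m. (-1)^j * ascent_sum a b j (ascent_density a b lam 0) (lam 1) (\<lambda>i. lam (Suc i)) *
      chain_total a b (m - j) (\<lambda>i. lam (Suc (i + j))))"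
    unfolding first_row by (rule chain_sum_ascent_expansion)
  also have "\<dots> = (\<Sum>j\<le>m. (-1)^j * Aentry lam a b 1 (j + 1) * chain_total a b (m - j) (\<lambda>i. lam (i + (j + 1))))"
    by (intro sum.cong refl) (use ascent in \<open>auto simp: ac_simps\<close>)
  finally show ?thesis .
qed

section \<open>The determinant\<close>

lemma det_hessenberg_first_row:
  fixes F :: "nat \<Rightarrow> nat \<Rightarrow> 'a::comm_ring_1"
  assumes "\<And>i. F (Suc i) i = 1" and "\<And>i j. Suc j < i \<Longrightarrow> F i j = 0"
  shows "det (mat (Suc m) (Suc m) (\<lambda>(i, j). if i = 0 then G j else F i j)) =
    (\<Sum>j\<le>m. (-1)^j * G j * det (mat (m - j) (m - j) (\<lambda>(i, j'). F (i + Suc j) (j' + Suc j))))"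
  using assms
proof (induction m arbitrary: F G)
  case 0
  let ?A = "mat (Suc 0) (Suc 0) (\<lambda>(i, j). if i = 0 then G j else F i j)"
  have A: "?A \<in> carrier_mat (Suc 0) (Suc 0)" by simp
  have "det ?A = ?A $$ (0, 0) * cofactor ?A 0 0"
    using laplace_expansion_column[OF A, of 0] by simp
  also have "\<dots> = G 0"
    using mat_delete_carrier[OF A, of 0 0] by (simp add: cofactor_def)
  finally show ?case by simp
next
  case (Suc m)
  let ?A = "mat (Suc (Suc m)) (Suc (Suc m)) (\<lambda>(i, j). if i = 0 then G j else F i j)"
  have A: "?A \<in> carrier_mat (Suc (Suc m)) (Suc (Suc m))" by simp
  have "det ?A = (\<Sum>i<Suc (Suc m). ?A $$ (i, 0) * cofactor ?A i 0)"
    by (rule laplace_expansion_column[OF A]) simp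
  also have "\<dots> = (\<Sum>i\<in>{0, 1}. ?A $$ (i, 0) * cofactor ?A i 0)"
    by (rule sum.mono_neutral_right) (use Suc.prems in auto)
  finally have laplace: "det ?A = ?A $$ (0, 0) * cofactor ?A 0 0 + ?A $$ (1, 0) * cofactor ?A 1 0"
    by simp
  have minor00: "mat_delete ?A 0 0 = mat (Suc m) (Suc m) (\<lambda>(i, j). F (Suc i) (Suc j))"
    by (rule eq_matI) (auto simp: mat_delete_def)
  have minor10: "mat_delete ?A 1 0 =
      mat (Suc m) (Suc m) (\<lambda>(i, j). if i = 0 then G (Suc j) else F (Suc i) (Suc j))"
    by (rule eq_matI) (auto simp: mat_delete_def)
  have "det ?A = G 0 * det (mat (Suc m) (Suc m) (\<lambda>(i, j). F (Suc i) (Suc j))) -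
     (\<Sum>j\<le>m. (-1)^j * G (Suc j) *
        det (mat (m - j) (m - j) (\<lambda>(i, j'). F (Suc (i + Suc j)) (Suc (j' + Suc j)))))"
    using laplace minor00 minor10 Suc.prems
      Suc.IH[where F="\<lambda>i j. F (Suc i) (Suc j)" and G="\<lambda>j. G (Suc j)"]
    by (simp add: cofactor_def)
  also have "\<dots> = (\<Sum>j\<le>Suc m. (-1)^j * G j *
      det (mat (Suc m - j) (Suc m - j) (\<lambda>(i, j'). F (i + Suc j) (j' + Suc j))))"
    by (subst sum.atMost_Suc_shift) (simp add: sum_negf[symmetric])
  finally show ?case .
qed

lemma Aentry_shift: "Aentry lam a b (i + s) (j + s) = Aentry (\<lambda>x. lam (x + s)) a b i j"
proof -
  have "int (j + s) - int (i + s) = int j - int i" "lam (j + s + 1) = lam (j + 1 + s)" by simp_all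
  then show ?thesis unfolding Aentry_def by simp
qed

lemma Aentry_subdiagonal: "b \<noteq> 0 \<Longrightarrow> Aentry lam a b (Suc j) j = 1"
  by (simp add: Aentry_def cbinom_def power_int_minus)

lemma Aentry_below_subdiagonal: "Suc j < i \<Longrightarrow> Aentry lam a b i j = 0"
  unfolding Aentry_def cbinom_def by simp

definition Adet :: "real \<Rightarrow> real \<Rightarrow> nat \<Rightarrow> (nat \<Rightarrow> nat) \<Rightarrow> real" where
  "Adet a b k lam = det (mat k k (\<lambda>(i, j). Aentry lam a b (i + 1) (j + 1)))"

lemma Adet_first_row_expansion:
  assumes "b \<noteq> 0"
  shows "Adet a b (Suc m) lam =
    (\<Sum>j\<le>m. (-1)^j * Aentry lam a b 1 (j + 1) * Adet a b (m - j) (\<lambda>i. lam (i + (j + 1))))"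
proof -
  let ?F = "\<lambda>i j. Aentry lam a b (i + 1) (j + 1)"
  have minor: "mat (m - j) (m - j) (\<lambda>(i, j'). ?F (i + Suc j) (j' + Suc j)) =
      mat (m - j) (m - j) (\<lambda>(i, j'). Aentry (\<lambda>i. lam (i + (j + 1))) a b (i + 1) (j' + 1))" for j
    using Aentry_shift[of lam a b "i + 1" "j + 1" "j' + 1" for i j']
    by (intro eq_matI) (auto simp: ac_simps)
  have "mat (Suc m) (Suc m) (\<lambda>(i, j). ?F i j) = mat (Suc m) (Suc m) (\<lambda>(i, j). if i = 0 then ?F 0 j else ?F i j)"
    by (rule eq_matI) auto
  then have "Adet a b (Suc m) lam =
      (\<Sum>j\<le>m. (-1)^j * ?F 0 j * det (mat (m - j) (m - j) (\<lambda>(i, j'). ?F (i + Suc j) (j' + Suc j))))"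
    unfolding Adet_def
    by (simp only:) (rule det_hessenberg_first_row,
        use assms Aentry_subdiagonal Aentry_below_subdiagonal in auto)
  also have "\<dots> = (\<Sum>j\<le>m. (-1)^j * Aentry lam a b 1 (j + 1) * Adet a b (m - j) (\<lambda>i. lam (i + (j + 1))))"
    unfolding minor by (simp add: Adet_def)
  finally show ?thesis .
qed

lemma Adet_eq_chain_total:
  assumes "b \<noteq> 0"
    and "\<And>i j. 1 \<le> i \<Longrightarrow> i \<le> j \<Longrightarrow> j \<le> k \<Longrightarrow> lam j \<le> lam i" and "lam (k + 1) = 0"
  shows "Adet a b k lam = chain_total a b k lam"
  using assms(2,3)
proof (induction k arbitrary: lam rule: less_induct)
  case (less k)
  show ?case
  proof (cases k)
    case 0
    then show ?thesis by (simp add: Adet_def chain_total_def)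
  next
    case (Suc m)
    have minors: "Adet a b (m - j) (\<lambda>i. lam (i + (j + 1))) = chain_total a b (m - j) (\<lambda>i. lam (i + (j + 1)))"
      if "j \<le> m" for j
      by (rule less.IH) (use less.prems Suc that in auto)
    have "lam j \<le> lam i" if "1 \<le> i" "i \<le> j" "j \<le> m + 2" for i j
      using less.prems Suc that by (cases "j = m + 2") auto
    then show ?thesis
      using minors by (simp add: Suc Adet_first_row_expansion[OF assms(1)] chain_total_first_row_expansion)
  qed
qed

section \<open>Condensed Catalan tableaux\<close>

lemma mem_boxes: "(r, c) \<in> boxes k lam \<longleftrightarrow> 1 \<le> r \<and> r \<le> k \<and> 1 \<le> c \<and> c \<le> lam r"
  by (simp add: boxes_def)

lemma finite_boxes [simp]: "finite (boxes k lam)"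
proof -
  have "boxes k lam = (SIGMA r:{1..k}. {1..lam r})" by (auto simp: mem_boxes)
  then show ?thesis by simp
qed

lemma boxes_cong: "(\<And>r. 1 \<le> r \<Longrightarrow> r \<le> k \<Longrightarrow> lam r = lam' r) \<Longrightarrow> boxes k lam = boxes k lam'"
  unfolding boxes_def by auto

lemma is_CCT_outside: "is_CCT k lam T \<Longrightarrow> x \<notin> boxes k lam \<Longrightarrow> T x = Empty"
  unfolding is_CCT_def by blast

lemma is_CCT_beta_row:
  "is_CCT k lam T \<Longrightarrow> (r, c) \<in> boxes k lam \<Longrightarrow> T (r, c) = Beta \<Longrightarrow> 1 \<le> c' \<Longrightarrow> c' < c \<Longrightarrow>
    T (r, c') = Empty"
  unfolding is_CCT_def by blast

lemma is_CCT_alpha_column: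
  "is_CCT k lam T \<Longrightarrow> (r, c) \<in> boxes k lam \<Longrightarrow> T (r, c) = Alpha \<Longrightarrow> 1 \<le> r' \<Longrightarrow> r' < r \<Longrightarrow>
    T (r', c) = Empty"
  unfolding is_CCT_def by blast

lemma is_CCT_filled:
  "is_CCT k lam T \<Longrightarrow> (r, c) \<in> boxes k lam \<Longrightarrow>
    (\<And>r'. r < r' \<Longrightarrow> (r', c) \<in> boxes k lam \<Longrightarrow> T (r', c) \<noteq> Alpha) \<Longrightarrow>
    (\<And>c'. c < c' \<Longrightarrow> (r, c') \<in> boxes k lam \<Longrightarrow> T (r, c') \<noteq> Beta) \<Longrightarrow> T (r, c) \<noteq> Empty"
  unfolding is_CCT_def by blast

lemma is_CCT_intro:
  assumes "\<And>x. x \<notin> boxes k lam \<Longrightarrow> T x = Empty"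
    and "\<And>r c c'. (r, c) \<in> boxes k lam \<Longrightarrow> T (r, c) = Beta \<Longrightarrow> 1 \<le> c' \<Longrightarrow> c' < c \<Longrightarrow>
      T (r, c') = Empty"
    and "\<And>r c r'. (r, c) \<in> boxes k lam \<Longrightarrow> T (r, c) = Alpha \<Longrightarrow> 1 \<le> r' \<Longrightarrow> r' < r \<Longrightarrow>
      T (r', c) = Empty"
    and "\<And>r c. (r, c) \<in> boxes k lam \<Longrightarrow>
      (\<And>r'. r < r' \<Longrightarrow> (r', c) \<in> boxes k lam \<Longrightarrow> T (r', c) \<noteq> Alpha) \<Longrightarrow>
      (\<And>c'. c < c' \<Longrightarrow> (r, c') \<in> boxes k lam \<Longrightarrow> T (r, c') \<noteq> Beta) \<Longrightarrow> T (r, c) \<noteq> Empty"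
  shows "is_CCT k lam T"
  using assms unfolding is_CCT_def by blast

lemma UNIV_cell: "(UNIV :: cell set) = {Alpha, Beta, Empty}"
  by (auto intro: cell.exhaust)

lemma finite_CCT: "finite {T. is_CCT k lam T}"
proof -
  let ?B = "boxes k lam"
  let ?extend = "\<lambda>g x. if x \<in> ?B then g x else Empty"
  have "{T. is_CCT k lam T} \<subseteq> ?extend ` (?B \<rightarrow>\<^sub>E (UNIV :: cell set))"
  proof
    fix T assume "T \<in> {T. is_CCT k lam T}"
    then have "T x = Empty" if "x \<notin> ?B" for x using that is_CCT_outside by blast
    then have "T = ?extend (restrict T ?B)" by (auto simp: restrict_def)
    moreover have "restrict T ?B \<in> ?B \<rightarrow>\<^sub>E UNIV" by simp
    ultimately show "T \<in> ?extend ` (?B \<rightarrow>\<^sub>E UNIV)" by blast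
  qed
  moreover have "finite (?extend ` (?B \<rightarrow>\<^sub>E (UNIV :: cell set)))"
    by (intro finite_imageI finite_PiE) (auto simp: UNIV_cell)
  ultimately show ?thesis by (rule finite_subset)
qed

definition cct_sum :: "real \<Rightarrow> real \<Rightarrow> nat \<Rightarrow> (nat \<Rightarrow> nat) \<Rightarrow> real" where
  "cct_sum a b k lam = (\<Sum>T | is_CCT k lam T. a ^ num_alpha k lam T * b ^ num_beta k lam T)"

lemma cct_sum_cong:
  assumes "\<And>r. 1 \<le> r \<Longrightarrow> r \<le> k \<Longrightarrow> lam r = lam' r"
  shows "cct_sum a b k lam = cct_sum a b k lam'"
proof -
  have "boxes k lam = boxes k lam'" by (rule boxes_cong) (rule assms)
  then show ?thesis unfolding cct_sum_def is_CCT_def num_alpha_def num_beta_def by simp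
qed

lemma cct_sum_empty_shape:
  assumes "\<And>r. 1 \<le> r \<Longrightarrow> r \<le> k \<Longrightarrow> lam r = 0"
  shows "cct_sum a b k lam = 1"
proof -
  have no_boxes: "boxes k lam = {}" using assms by (fastforce simp: mem_boxes)
  have "is_CCT k lam T \<longleftrightarrow> T = (\<lambda>_. Empty)" for T
    using is_CCT_outside[of k lam T] is_CCT_intro[of k lam T] by (auto simp: no_boxes)
  then have "{T. is_CCT k lam T} = {\<lambda>_. Empty}" by auto
  then show ?thesis unfolding cct_sum_def num_alpha_def num_beta_def no_boxes by simp
qed

definition shorten_rows :: "nat \<Rightarrow> (nat \<Rightarrow> nat) \<Rightarrow> nat \<Rightarrow> nat" where
  "shorten_rows h lam r = (if r \<le> h then lam r - 1 else lam r)"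

definition skip_row :: "nat \<Rightarrow> nat \<Rightarrow> nat" where
  "skip_row h r = (if r < h then r else Suc r)"

definition unskip_row :: "nat \<Rightarrow> nat \<Rightarrow> nat" where
  "unskip_row h r = (if r < h then r else r - 1)"

definition delete_row :: "nat \<Rightarrow> (nat \<Rightarrow> nat) \<Rightarrow> nat \<Rightarrow> nat" where
  "delete_row h lam r = lam (skip_row h r)"

definition delete_row_filling :: "nat \<Rightarrow> (nat \<times> nat \<Rightarrow> cell) \<Rightarrow> nat \<times> nat \<Rightarrow> cell" where
  "delete_row_filling h T = (\<lambda>(r, c). T (skip_row h r, c))"

definition insert_beta_row :: "nat \<Rightarrow> nat \<Rightarrow> (nat \<times> nat \<Rightarrow> cell) \<Rightarrow> nat \<times> nat \<Rightarrow> cell" where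
  "insert_beta_row h M T =
     (\<lambda>(r, c). if r = h then (if c = M then Beta else Empty) else T (unskip_row h r, c))"

lemma delete_row_filling_apply [simp]: "delete_row_filling h T (r, c) = T (skip_row h r, c)"
  by (simp add: delete_row_filling_def)

lemma insert_beta_row_apply [simp]:
  "insert_beta_row h M T (r, c) =
     (if r = h then (if c = M then Beta else Empty) else T (unskip_row h r, c))"
  by (simp add: insert_beta_row_def)

lemma skip_row_neq: "skip_row h r \<noteq> h"
  by (simp add: skip_row_def)

lemma unskip_skip_row [simp]: "unskip_row h (skip_row h r) = r"
  by (simp add: skip_row_def unskip_row_def)

lemma skip_unskip_row: "r \<noteq> h \<Longrightarrow> skip_row h (unskip_row h r) = r"
  by (auto simp: skip_row_def unskip_row_def)

lemma skip_row_less_iff: "skip_row h r < skip_row h r' \<longleftrightarrow> r < r'"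
  by (auto simp: skip_row_def)

lemma skip_row_pos: "1 \<le> r \<Longrightarrow> 1 \<le> skip_row h r"
  by (simp add: skip_row_def)

lemma delete_insert_beta_row: "delete_row_filling h (insert_beta_row h M T) = T"
  by (rule ext) (simp add: delete_row_filling_def skip_row_neq)

locale corner_box =
  fixes k :: nat and lam :: "nat \<Rightarrow> nat" and h M :: nat
  assumes decreasing: "\<And>i j. 1 \<le> i \<Longrightarrow> i \<le> j \<Longrightarrow> j \<le> Suc k \<Longrightarrow> lam j \<le> lam i"
    and M_eq: "M = lam 1" and M_pos: "0 < M"
    and h_pos: "1 \<le> h" and h_le: "h \<le> Suc k" and lam_h: "lam h = M"
    and lam_below_h: "\<And>r. h < r \<Longrightarrow> r \<le> Suc k \<Longrightarrow> lam r < M"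
begin

lemma col_le_M: "(r, c) \<in> boxes (Suc k) lam \<Longrightarrow> c \<le> M"
  using decreasing[of 1 r] M_eq by (auto simp: mem_boxes)

lemma corner_column_iff: "(r, M) \<in> boxes (Suc k) lam \<longleftrightarrow> 1 \<le> r \<and> r \<le> h"
proof
  assume "(r, M) \<in> boxes (Suc k) lam"
  then have "1 \<le> r" "r \<le> Suc k" "M \<le> lam r" by (auto simp: mem_boxes)
  then show "1 \<le> r \<and> r \<le> h" using lam_below_h[of r] by (cases "h < r") auto
next
  assume "1 \<le> r \<and> r \<le> h"
  then show "(r, M) \<in> boxes (Suc k) lam"
    using decreasing[of r h] lam_h h_le M_pos by (auto simp: mem_boxes)
qed

lemma corner_in_boxes: "(h, M) \<in> boxes (Suc k) lam"
  using corner_column_iff h_pos by simp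

lemma corner_nonempty: "is_CCT (Suc k) lam T \<Longrightarrow> T (h, M) \<noteq> Empty"
  by (erule is_CCT_filled[OF _ corner_in_boxes]) (auto simp: corner_column_iff dest: col_le_M)

lemma boxes_shorten_rows:
  "(r, c) \<in> boxes (Suc k) (shorten_rows h lam) \<longleftrightarrow> (r, c) \<in> boxes (Suc k) lam \<and> c \<noteq> M"
proof (cases "1 \<le> r \<and> r \<le> h")
  case True
  then have "lam r = M" using decreasing[of r h] decreasing[of 1 r] lam_h M_eq h_le by fastforce
  then show ?thesis using True h_le by (auto simp: mem_boxes shorten_rows_def)
next
  case False
  then show ?thesis using lam_below_h[of r] by (auto simp: mem_boxes shorten_rows_def)
qed

lemma alpha_corner_column:
  assumes T: "is_CCT (Suc k) lam T" and alpha: "T (h, M) = Alpha" and "r \<noteq> h"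
  shows "T (r, M) = Empty"
proof (cases "(r, M) \<in> boxes (Suc k) lam")
  case True
  then have "1 \<le> r" "r < h" using corner_column_iff \<open>r \<noteq> h\<close> by auto
  then show ?thesis using is_CCT_alpha_column[OF T corner_in_boxes alpha] by simp
qed (use is_CCT_outside[OF T] in simp)

lemma is_CCT_remove_alpha_corner:
  assumes T: "is_CCT (Suc k) lam T" and alpha: "T (h, M) = Alpha"
  shows "is_CCT (Suc k) (shorten_rows h lam) (T((h, M) := Empty))"
proof (rule is_CCT_intro)
  let ?T = "T((h, M) := Empty)"
  note column_M = alpha_corner_column[OF T alpha]
  show "?T x = Empty" if "x \<notin> boxes (Suc k) (shorten_rows h lam)" for x
    using that column_M is_CCT_outside[OF T, of x] by (cases x) (auto simp: boxes_shorten_rows)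
  show "?T (r, c') = Empty"
    if "(r, c) \<in> boxes (Suc k) (shorten_rows h lam)" "?T (r, c) = Beta" "1 \<le> c'" "c' < c" for r c c'
    using that is_CCT_beta_row[OF T, of r c c'] by (auto simp: boxes_shorten_rows split: if_splits)
  show "?T (r', c) = Empty"
    if "(r, c) \<in> boxes (Suc k) (shorten_rows h lam)" "?T (r, c) = Alpha" "1 \<le> r'" "r' < r" for r c r'
    using that is_CCT_alpha_column[OF T, of r c r'] by (auto simp: boxes_shorten_rows split: if_splits)
  show "?T (r, c) \<noteq> Empty" if rc: "(r, c) \<in> boxes (Suc k) (shorten_rows h lam)"
    and no_alpha: "\<And>r'. r < r' \<Longrightarrow> (r', c) \<in> boxes (Suc k) (shorten_rows h lam) \<Longrightarrow> ?T (r', c) \<noteq> Alpha"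
    and no_beta: "\<And>c'. c < c' \<Longrightarrow> (r, c') \<in> boxes (Suc k) (shorten_rows h lam) \<Longrightarrow> ?T (r, c') \<noteq> Beta"
    for r c
  proof -
    have rc': "(r, c) \<in> boxes (Suc k) lam" and "c \<noteq> M" using rc by (auto simp: boxes_shorten_rows)
    have "T (r, c) \<noteq> Empty"
    proof (rule is_CCT_filled[OF T rc'])
      show "T (r', c) \<noteq> Alpha" if "r < r'" "(r', c) \<in> boxes (Suc k) lam" for r'
        using that no_alpha[of r'] \<open>c \<noteq> M\<close> by (auto simp: boxes_shorten_rows)
      show "T (r, c') \<noteq> Beta" if "c < c'" "(r, c') \<in> boxes (Suc k) lam" for c'
        using that no_beta[of c'] alpha column_M[of r] by (cases "c' = M"; cases "r = h") (auto simp: boxes_shorten_rows)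
    qed
    then show ?thesis using \<open>c \<noteq> M\<close> by simp
  qed
qed

lemma is_CCT_restore_alpha_corner:
  assumes T: "is_CCT (Suc k) (shorten_rows h lam) T"
  shows "is_CCT (Suc k) lam (T((h, M) := Alpha))"
proof (rule is_CCT_intro)
  let ?T = "T((h, M) := Alpha)"
  have column_M: "T (r, M) = Empty" for r
    using is_CCT_outside[OF T, of "(r, M)"] by (simp add: boxes_shorten_rows)
  have inside: "(r, c) \<in> boxes (Suc k) (shorten_rows h lam)" if "T (r, c) \<noteq> Empty" for r c
    using that is_CCT_outside[OF T] by blast
  show "?T x = Empty" if "x \<notin> boxes (Suc k) lam" for x
    using that corner_in_boxes is_CCT_outside[OF T, of x] by (cases x) (auto simp: boxes_shorten_rows)
  show "?T (r, c') = Empty" if "(r, c) \<in> boxes (Suc k) lam" "?T (r, c) = Beta" "1 \<le> c'" "c' < c"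
    for r c c'
    using that col_le_M[OF that(1)] inside[of r c] is_CCT_beta_row[OF T, of r c c']
    by (auto split: if_splits)
  show "?T (r', c) = Empty" if "(r, c) \<in> boxes (Suc k) lam" "?T (r, c) = Alpha" "1 \<le> r'" "r' < r"
    for r c r'
    using that column_M inside[of r c] is_CCT_alpha_column[OF T, of r c r']
    by (auto simp: boxes_shorten_rows split: if_splits)
  show "?T (r, c) \<noteq> Empty" if rc: "(r, c) \<in> boxes (Suc k) lam"
    and no_alpha: "\<And>r'. r < r' \<Longrightarrow> (r', c) \<in> boxes (Suc k) lam \<Longrightarrow> ?T (r', c) \<noteq> Alpha"
    and no_beta: "\<And>c'. c < c' \<Longrightarrow> (r, c') \<in> boxes (Suc k) lam \<Longrightarrow> ?T (r, c') \<noteq> Beta" for r c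
  proof (cases "c = M")
    case True
    then show ?thesis
      using rc no_alpha[of h] corner_in_boxes corner_column_iff[of r] by (cases "r = h") auto
  next
    case False
    then have rc': "(r, c) \<in> boxes (Suc k) (shorten_rows h lam)" using rc by (simp add: boxes_shorten_rows)
    have "T (r, c) \<noteq> Empty"
    proof (rule is_CCT_filled[OF T rc'])
      show "T (r', c) \<noteq> Alpha" if "r < r'" "(r', c) \<in> boxes (Suc k) (shorten_rows h lam)" for r'
        using that no_alpha[of r'] False by (auto simp: boxes_shorten_rows)
      show "T (r, c') \<noteq> Beta" if "c < c'" "(r, c') \<in> boxes (Suc k) (shorten_rows h lam)" for c'
        using that no_beta[of c'] by (auto simp: boxes_shorten_rows)
    qed
    then show ?thesis using False by simp
  qed
qed

lemma alpha_boxes_remove_corner: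
  assumes T: "is_CCT (Suc k) lam T" and alpha: "T (h, M) = Alpha"
  shows "{x \<in> boxes (Suc k) lam. T x = Alpha} =
    insert (h, M) {x \<in> boxes (Suc k) (shorten_rows h lam). (T((h, M) := Empty)) x = Alpha}"
  using alpha alpha_corner_column[OF T alpha] corner_in_boxes
  by (auto simp: boxes_shorten_rows split: if_splits)

lemma beta_boxes_remove_corner:
  assumes T: "is_CCT (Suc k) lam T" and alpha: "T (h, M) = Alpha"
  shows "{x \<in> boxes (Suc k) lam. T x = Beta} =
    {x \<in> boxes (Suc k) (shorten_rows h lam). (T((h, M) := Empty)) x = Beta}"
proof -
  have "T (r, M) \<noteq> Beta" for r using alpha alpha_corner_column[OF T alpha, of r] by (cases "r = h") auto
  then show ?thesis by (auto simp: boxes_shorten_rows split: if_splits)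
qed

lemma sum_alpha_corner:
  "(\<Sum>T | is_CCT (Suc k) lam T \<and> T (h, M) = Alpha.
      a ^ num_alpha (Suc k) lam T * b ^ num_beta (Suc k) lam T) =
    a * cct_sum a b (Suc k) (shorten_rows h lam)"
proof -
  let ?lam' = "shorten_rows h lam"
  have bij: "bij_betw (\<lambda>T. T((h, M) := Empty)) {T. is_CCT (Suc k) lam T \<and> T (h, M) = Alpha}
      {T. is_CCT (Suc k) ?lam' T}"
  proof (rule bij_betw_byWitness[where f'="\<lambda>T. T((h, M) := Alpha)"])
    show "\<forall>T\<in>{T. is_CCT (Suc k) ?lam' T}. (T((h, M) := Alpha))((h, M) := Empty) = T"
    proof
      fix T assume "T \<in> {T. is_CCT (Suc k) ?lam' T}"
      then have "T (h, M) = Empty" using is_CCT_outside[of _ _ T "(h, M)"] by (simp add: boxes_shorten_rows)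
      then show "(T((h, M) := Alpha))((h, M) := Empty) = T" by auto
    qed
  qed (auto simp: is_CCT_remove_alpha_corner is_CCT_restore_alpha_corner)
  have "(\<Sum>T | is_CCT (Suc k) lam T \<and> T (h, M) = Alpha.
      a ^ num_alpha (Suc k) lam T * b ^ num_beta (Suc k) lam T) =
    (\<Sum>T | is_CCT (Suc k) lam T \<and> T (h, M) = Alpha.
      a * (a ^ num_alpha (Suc k) ?lam' (T((h, M) := Empty)) * b ^ num_beta (Suc k) ?lam' (T((h, M) := Empty))))"
    by (intro sum.cong refl)
      (simp add: num_alpha_def num_beta_def alpha_boxes_remove_corner beta_boxes_remove_corner
        boxes_shorten_rows)
  also have "\<dots> = a * cct_sum a b (Suc k) ?lam'"
    unfolding cct_sum_def sum_distrib_left by (rule sum.reindex_bij_betw[OF bij])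
  finally show ?thesis .
qed

lemma unskip_row_pos: "1 \<le> r \<Longrightarrow> r \<noteq> h \<Longrightarrow> 1 \<le> unskip_row h r"
  using h_pos by (auto simp: unskip_row_def)

lemma boxes_delete_row: "(r, c) \<in> boxes k (delete_row h lam) \<longleftrightarrow> (skip_row h r, c) \<in> boxes (Suc k) lam"
  using h_pos h_le by (auto simp: mem_boxes delete_row_def skip_row_def)

lemma boxes_delete_row_unskip:
  "r \<noteq> h \<Longrightarrow> (r, c) \<in> boxes (Suc k) lam \<longleftrightarrow> (unskip_row h r, c) \<in> boxes k (delete_row h lam)"
  using boxes_delete_row[of "unskip_row h r" c] skip_unskip_row by simp

lemma beta_corner_row:
  assumes T: "is_CCT (Suc k) lam T" and beta: "T (h, M) = Beta" and "c \<noteq> M"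
  shows "T (h, c) = Empty"
proof (cases "(h, c) \<in> boxes (Suc k) lam")
  case True
  then show ?thesis
    using col_le_M[OF True] is_CCT_beta_row[OF T corner_in_boxes beta, of c] \<open>c \<noteq> M\<close>
    by (simp add: mem_boxes)
qed (use is_CCT_outside[OF T] in simp)

lemma is_CCT_delete_beta_row:
  assumes T: "is_CCT (Suc k) lam T" and beta: "T (h, M) = Beta"
  shows "is_CCT k (delete_row h lam) (delete_row_filling h T)"
proof (rule is_CCT_intro)
  let ?T = "delete_row_filling h T"
  have row_h: "T (h, c) \<noteq> Alpha" for c
    using beta_corner_row[OF T beta, of c] beta by (cases "c = M") auto
  show "?T x = Empty" if "x \<notin> boxes k (delete_row h lam)" for x
    using that is_CCT_outside[OF T] by (cases x) (auto simp: boxes_delete_row)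
  show "?T (r, c') = Empty"
    if "(r, c) \<in> boxes k (delete_row h lam)" "?T (r, c) = Beta" "1 \<le> c'" "c' < c" for r c c'
    using that is_CCT_beta_row[OF T, of "skip_row h r" c c'] by (simp add: boxes_delete_row)
  show "?T (r', c) = Empty"
    if "(r, c) \<in> boxes k (delete_row h lam)" "?T (r, c) = Alpha" "1 \<le> r'" "r' < r" for r c r'
    using that is_CCT_alpha_column[OF T, of "skip_row h r" c "skip_row h r'"] skip_row_pos[OF that(3)]
    by (simp add: boxes_delete_row skip_row_less_iff)
  show "?T (r, c) \<noteq> Empty" if rc: "(r, c) \<in> boxes k (delete_row h lam)"
    and no_alpha: "\<And>r'. r < r' \<Longrightarrow> (r', c) \<in> boxes k (delete_row h lam) \<Longrightarrow> ?T (r', c) \<noteq> Alpha"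
    and no_beta: "\<And>c'. c < c' \<Longrightarrow> (r, c') \<in> boxes k (delete_row h lam) \<Longrightarrow> ?T (r, c') \<noteq> Beta"
    for r c
  proof -
    have "T (skip_row h r, c) \<noteq> Empty"
    proof (rule is_CCT_filled[OF T])
      show "(skip_row h r, c) \<in> boxes (Suc k) lam" using rc by (simp add: boxes_delete_row)
      show "T (r', c) \<noteq> Alpha" if "skip_row h r < r'" "(r', c) \<in> boxes (Suc k) lam" for r'
      proof (cases "r' = h")
        case False
        then show ?thesis
          using that no_alpha[of "unskip_row h r'"] skip_row_less_iff[of h r "unskip_row h r'"]
          by (simp add: boxes_delete_row skip_unskip_row)
      qed (simp add: row_h)
      show "T (skip_row h r, c') \<noteq> Beta" if "c < c'" "(skip_row h r, c') \<in> boxes (Suc k) lam" for c'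
        using that no_beta[of c'] by (simp add: boxes_delete_row)
    qed
    then show ?thesis by simp
  qed
qed

lemma is_CCT_insert_beta_row:
  assumes T: "is_CCT k (delete_row h lam) T"
  shows "is_CCT (Suc k) lam (insert_beta_row h M T)"
proof (rule is_CCT_intro)
  let ?T = "insert_beta_row h M T"
  show "?T x = Empty" if "x \<notin> boxes (Suc k) lam" for x
    using that corner_in_boxes is_CCT_outside[OF T] by (cases x) (auto simp: boxes_delete_row_unskip)
  show "?T (r, c') = Empty" if "(r, c) \<in> boxes (Suc k) lam" "?T (r, c) = Beta" "1 \<le> c'" "c' < c"
    for r c c'
    using that col_le_M[OF that(1)] is_CCT_beta_row[OF T, of "unskip_row h r" c c']
    by (auto simp: boxes_delete_row_unskip split: if_splits)
  show "?T (r', c) = Empty" if rc: "(r, c) \<in> boxes (Suc k) lam" "?T (r, c) = Alpha" "1 \<le> r'" "r' < r"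
    for r c r'
  proof -
    have "r \<noteq> h" and alpha: "T (unskip_row h r, c) = Alpha" using rc(2) by (auto split: if_splits)
    then have box: "(unskip_row h r, c) \<in> boxes k (delete_row h lam)"
      using rc(1) boxes_delete_row_unskip by blast
    show ?thesis
    proof (cases "r' = h")
      case False
      have "unskip_row h r' < unskip_row h r"
        using skip_row_less_iff[of h "unskip_row h r'" "unskip_row h r"] rc(4)
        by (simp add: skip_unskip_row False \<open>r \<noteq> h\<close>)
      then show ?thesis
        using is_CCT_alpha_column[OF T box alpha] unskip_row_pos[OF rc(3) False] False by simp
    qed (use rc corner_column_iff[of r] in auto)
  qed
  show "?T (r, c) \<noteq> Empty" if rc: "(r, c) \<in> boxes (Suc k) lam"
    and no_alpha: "\<And>r'. r < r' \<Longrightarrow> (r', c) \<in> boxes (Suc k) lam \<Longrightarrow> ?T (r', c) \<noteq> Alpha"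
    and no_beta: "\<And>c'. c < c' \<Longrightarrow> (r, c') \<in> boxes (Suc k) lam \<Longrightarrow> ?T (r, c') \<noteq> Beta" for r c
  proof (cases "r = h")
    case True
    then show ?thesis using no_beta[of M] col_le_M[OF rc] corner_in_boxes by (cases "c = M") auto
  next
    case False
    have box: "(unskip_row h r, c) \<in> boxes k (delete_row h lam)"
      using rc boxes_delete_row_unskip[OF False] by simp
    have "T (unskip_row h r, c) \<noteq> Empty"
    proof (rule is_CCT_filled[OF T box])
      show "T (r', c) \<noteq> Alpha" if "unskip_row h r < r'" "(r', c) \<in> boxes k (delete_row h lam)" for r'
        using that no_alpha[of "skip_row h r'"] skip_row_less_iff[of h "unskip_row h r" r']
        by (simp add: boxes_delete_row skip_unskip_row False skip_row_neq)
      show "T (unskip_row h r, c') \<noteq> Beta"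
        if "c < c'" "(unskip_row h r, c') \<in> boxes k (delete_row h lam)" for c'
        using that no_beta[of c'] boxes_delete_row_unskip[OF False] False by simp
    qed
    then show ?thesis using False by simp
  qed
qed

lemma insert_delete_beta_row:
  assumes T: "is_CCT (Suc k) lam T" and beta: "T (h, M) = Beta"
  shows "insert_beta_row h M (delete_row_filling h T) = T"
proof (rule ext, clarify)
  fix r c
  show "insert_beta_row h M (delete_row_filling h T) (r, c) = T (r, c)"
    using beta beta_corner_row[OF T beta, of c] by (auto simp: skip_unskip_row)
qed

lemma alpha_boxes_delete_row:
  assumes T: "is_CCT (Suc k) lam T" and beta: "T (h, M) = Beta"
  shows "{x \<in> boxes (Suc k) lam. T x = Alpha} =
    map_prod (skip_row h) id ` {x \<in> boxes k (delete_row h lam). delete_row_filling h T x = Alpha}"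
proof (intro equalityI subsetI)
  fix x assume "x \<in> {x \<in> boxes (Suc k) lam. T x = Alpha}"
  then obtain r c where x: "x = (r, c)" "(r, c) \<in> boxes (Suc k) lam" "T (r, c) = Alpha" by (cases x) auto
  then have "r \<noteq> h" using beta beta_corner_row[OF T beta, of c] by (cases "c = M") auto
  then show "x \<in> map_prod (skip_row h) id ` {x \<in> boxes k (delete_row h lam). delete_row_filling h T x = Alpha}"
    using x boxes_delete_row_unskip[OF \<open>r \<noteq> h\<close>]
    by (auto simp: skip_unskip_row intro!: image_eqI[of _ _ "(unskip_row h r, c)"])
qed (auto simp: boxes_delete_row)

lemma beta_boxes_delete_row:
  assumes T: "is_CCT (Suc k) lam T" and beta: "T (h, M) = Beta"
  shows "{x \<in> boxes (Suc k) lam. T x = Beta} = insert (h, M)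
    (map_prod (skip_row h) id ` {x \<in> boxes k (delete_row h lam). delete_row_filling h T x = Beta})"
proof (intro equalityI subsetI)
  fix x assume "x \<in> {x \<in> boxes (Suc k) lam. T x = Beta}"
  then obtain r c where x: "x = (r, c)" "(r, c) \<in> boxes (Suc k) lam" "T (r, c) = Beta" by (cases x) auto
  show "x \<in> insert (h, M)
      (map_prod (skip_row h) id ` {x \<in> boxes k (delete_row h lam). delete_row_filling h T x = Beta})"
  proof (cases "r = h")
    case True
    then show ?thesis using x beta_corner_row[OF T beta, of c] by (cases "c = M") auto
  next
    case False
    then show ?thesis
      using x boxes_delete_row_unskip[OF False]
      by (auto simp: skip_unskip_row intro!: image_eqI[of _ _ "(unskip_row h r, c)"])
  qed
qed (use corner_in_boxes beta in \<open>auto simp: boxes_delete_row\<close>)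

lemma sum_beta_corner:
  "(\<Sum>T | is_CCT (Suc k) lam T \<and> T (h, M) = Beta.
      a ^ num_alpha (Suc k) lam T * b ^ num_beta (Suc k) lam T) =
    b * cct_sum a b k (delete_row h lam)"
proof -
  let ?lam' = "delete_row h lam"
  have bij: "bij_betw (delete_row_filling h) {T. is_CCT (Suc k) lam T \<and> T (h, M) = Beta}
      {T. is_CCT k ?lam' T}"
    by (rule bij_betw_byWitness[where f'="insert_beta_row h M"])
      (auto simp: insert_delete_beta_row delete_insert_beta_row is_CCT_delete_beta_row
        is_CCT_insert_beta_row)
  have inj: "inj_on (map_prod (skip_row h) id) A" for A
    by (rule inj_onI) (clarsimp, metis unskip_skip_row)
  have "(h, M) \<notin> map_prod (skip_row h) id ` A" for A by (auto dest: sym simp: skip_row_neq)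
  then have "(\<Sum>T | is_CCT (Suc k) lam T \<and> T (h, M) = Beta.
      a ^ num_alpha (Suc k) lam T * b ^ num_beta (Suc k) lam T) =
    (\<Sum>T | is_CCT (Suc k) lam T \<and> T (h, M) = Beta.
      b * (a ^ num_alpha k ?lam' (delete_row_filling h T) * b ^ num_beta k ?lam' (delete_row_filling h T)))"
    by (intro sum.cong refl)
      (simp add: num_alpha_def num_beta_def alpha_boxes_delete_row beta_boxes_delete_row
        card_image[OF inj] card_insert_disjoint)
  also have "\<dots> = b * cct_sum a b k ?lam'"
    unfolding cct_sum_def sum_distrib_left by (rule sum.reindex_bij_betw[OF bij])
  finally show ?thesis .
qed

lemma cct_sum_corner_recurrence:
  "cct_sum a b (Suc k) lam =
    b * cct_sum a b k (delete_row h lam) + a * cct_sum a b (Suc k) (shorten_rows h lam)"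
proof -
  let ?w = "\<lambda>T. a ^ num_alpha (Suc k) lam T * b ^ num_beta (Suc k) lam T"
  have "T (h, M) = Beta \<or> T (h, M) = Alpha" if "is_CCT (Suc k) lam T" for T
    using corner_nonempty[OF that] by (cases "T (h, M)") auto
  then have split: "{T. is_CCT (Suc k) lam T} =
      {T. is_CCT (Suc k) lam T \<and> T (h, M) = Beta} \<union> {T. is_CCT (Suc k) lam T \<and> T (h, M) = Alpha}"
    by auto
  have finite: "finite {T. is_CCT (Suc k) lam T \<and> P T}" for P
    by (rule finite_subset[OF _ finite_CCT]) auto
  have "cct_sum a b (Suc k) lam =
      (\<Sum>T | is_CCT (Suc k) lam T \<and> T (h, M) = Beta. ?w T) +
      (\<Sum>T | is_CCT (Suc k) lam T \<and> T (h, M) = Alpha. ?w T)"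
    unfolding cct_sum_def split by (rule sum.union_disjoint[OF finite finite]) auto
  then show ?thesis by (simp add: sum_alpha_corner sum_beta_corner)
qed

end

section \<open>Tableau sums equal chain sums\<close>

lemma chain_sum_cong:
  "(\<And>r. 1 \<le> r \<Longrightarrow> mu r = mu' r) \<Longrightarrow> chain_sum a b k mu x = chain_sum a b k mu' x"
proof (induction k arbitrary: mu mu' x)
  case 0
  then show ?case by simp
next
  case (Suc k)
  have "mu 1 = mu' 1" "mu 2 = mu' 2" using Suc.prems by auto
  moreover have "chain_sum a b k (\<lambda>i. mu (Suc i)) v = chain_sum a b k (\<lambda>i. mu' (Suc i)) v" for v
    by (rule Suc.IH) (use Suc.prems in auto)
  ultimately show ?case by simp
qed

lemma chain_sum_shorten_rows:
  assumes "\<And>r. 1 \<le> r \<Longrightarrow> r \<le> h \<Longrightarrow> lam r = M" and "1 \<le> h" and "h \<le> k"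
    and "\<And>r. h < r \<Longrightarrow> r \<le> k + 1 \<Longrightarrow> lam r < M" and "x < M"
  shows "chain_sum a b k lam x = a * chain_sum a b k (shorten_rows h lam) x"
  using assms
proof (induction k arbitrary: lam h x)
  case 0
  then show ?case by simp
next
  case (Suc k)
  let ?lam' = "shorten_rows h lam"
  have lam1: "lam 1 = M" and lam'1: "?lam' 1 = M - 1"
    using Suc.prems by (auto simp: shorten_rows_def)
  have summand: "row_weight a b (lam 1) (lam 2) v * chain_sum a b k (\<lambda>i. lam (Suc i)) v =
      a * (row_weight a b (?lam' 1) (?lam' 2) v * chain_sum a b k (\<lambda>i. ?lam' (Suc i)) v)"
    if "v \<le> x" for v
  proof (cases "h = 1")
    case True
    then have "lam 2 < M" using Suc.prems by simp
    then have "M - max v (lam 2) = Suc (M - 1 - max v (lam 2))" using that Suc.prems by simp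
    then have "row_weight a b (lam 1) (lam 2) v = a * row_weight a b (?lam' 1) (?lam' 2) v"
      using True lam1 lam'1 by (simp add: row_weight_def shorten_rows_def)
    moreover have "chain_sum a b k (\<lambda>i. ?lam' (Suc i)) v = chain_sum a b k (\<lambda>i. lam (Suc i)) v"
      by (rule chain_sum_cong) (simp add: shorten_rows_def True)
    ultimately show ?thesis by simp
  next
    case False
    then have h2: "2 \<le> h" using Suc.prems by simp
    then have "lam 2 = M" using Suc.prems by simp
    then have "row_weight a b (lam 1) (lam 2) v = row_weight a b (?lam' 1) (?lam' 2) v"
      using h2 that Suc.prems lam1 by (simp add: row_weight_def shorten_rows_def)
    moreover have "chain_sum a b k (\<lambda>i. lam (Suc i)) v =
        a * chain_sum a b k (shorten_rows (h - 1) (\<lambda>i. lam (Suc i))) v"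
      by (rule Suc.IH) (use Suc.prems that h2 in auto)
    moreover have "shorten_rows (h - 1) (\<lambda>i. lam (Suc i)) = (\<lambda>i. ?lam' (Suc i))"
      using h2 by (intro ext) (auto simp: shorten_rows_def)
    ultimately show ?thesis by simp
  qed
  have "min x (lam 1) = x" "min x (?lam' 1) = x" using lam1 lam'1 Suc.prems by auto
  then show ?case
    unfolding chain_sum.simps sum_distrib_left by (simp only:) (intro sum.cong refl summand, simp)
qed

lemma chain_total_corner_recurrence:
  assumes "\<And>r. 1 \<le> r \<Longrightarrow> r \<le> h \<Longrightarrow> lam r = M" and "1 \<le> h" and "h \<le> Suc k"
    and "\<And>r. h < r \<Longrightarrow> r \<le> Suc k + 1 \<Longrightarrow> lam r < M" and "0 < M"
  shows "chain_total a b (Suc k) lam =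
    b * chain_total a b k (\<lambda>i. lam (Suc i)) + a * chain_total a b (Suc k) (shorten_rows h lam)"
proof -
  let ?F = "\<lambda>v. row_weight a b (lam 1) (lam 2) v * chain_sum a b k (\<lambda>i. lam (Suc i)) v"
  have lam1: "lam 1 = M" "lam (Suc 0) = M" using assms by auto
  have lam2: "lam 2 \<le> M" using assms(1)[of 2] assms(2,3) assms(4)[of 2] by (cases "2 \<le> h") auto
  obtain M' where M': "M = Suc M'" using assms by (cases M) auto
  have "chain_total a b (Suc k) lam = (\<Sum>v\<le>M'. ?F v) + ?F M"
    by (simp add: chain_total_def lam1 M')
  also have "(\<Sum>v\<le>M'. ?F v) = chain_sum a b (Suc k) lam M'"
    using M' lam1 by (simp add: min_def)
  also have "\<dots> = a * chain_sum a b (Suc k) (shorten_rows h lam) M'"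
    by (rule chain_sum_shorten_rows) (use assms M' in auto)
  also have "chain_sum a b (Suc k) (shorten_rows h lam) M' = chain_total a b (Suc k) (shorten_rows h lam)"
    by (rule chain_sum_eq_chain_total) (use assms M' in \<open>simp add: shorten_rows_def\<close>)
  also have "?F M = b * chain_total a b k (\<lambda>i. lam (Suc i))"
    using lam1 lam2 assms chain_sum_eq_chain_total[of "\<lambda>i. lam (Suc i)" M a b k]
    by (simp add: row_weight_def max_def numeral_2_eq_2)
  finally show ?thesis by simp
qed

lemma chain_total_empty_shape:
  "(\<And>r. 1 \<le> r \<Longrightarrow> r \<le> k + 1 \<Longrightarrow> lam r = 0) \<Longrightarrow> chain_total a b k lam = 1"
proof (induction k arbitrary: lam)
  case 0
  then show ?case by (simp add: chain_total_def)
next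
  case (Suc k)
  have "chain_sum a b k (\<lambda>i. lam (Suc i)) 0 = chain_total a b k (\<lambda>i. lam (Suc i))"
    by (rule chain_sum_eq_chain_total) (use Suc.prems in simp)
  also have "\<dots> = 1" by (rule Suc.IH) (use Suc.prems in auto)
  finally show ?case using Suc.prems by (simp add: chain_total_def row_weight_def)
qed

lemma obtain_last_longest_row:
  fixes lam :: "nat \<Rightarrow> nat"
  assumes "\<And>i j. 1 \<le> i \<Longrightarrow> i \<le> j \<Longrightarrow> j \<le> k \<Longrightarrow> lam j \<le> lam i" and "1 \<le> k"
  obtains h where "1 \<le> h" "h \<le> k" "\<And>r. 1 \<le> r \<Longrightarrow> r \<le> h \<Longrightarrow> lam r = lam 1"
    "\<And>r. h < r \<Longrightarrow> r \<le> k \<Longrightarrow> lam r < lam 1"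
proof -
  define H where "H = {r \<in> {1..k}. lam r = lam 1}"
  have "finite H" "1 \<in> H" using assms(2) by (auto simp: H_def)
  then have max_in: "Max H \<in> H" and max_ge: "\<And>r. r \<in> H \<Longrightarrow> r \<le> Max H" by (auto intro: Max_in)
  show ?thesis
  proof (rule that[of "Max H"])
    show "1 \<le> Max H" "Max H \<le> k" using max_in by (auto simp: H_def)
    show "lam r = lam 1" if "1 \<le> r" "r \<le> Max H" for r
      using assms(1)[of 1 r] assms(1)[of r "Max H"] max_in that by (auto simp: H_def)
    show "lam r < lam 1" if "Max H < r" "r \<le> k" for r
    proof -
      have "r \<notin> H" using max_ge that by force
      then show ?thesis using assms(1)[of 1 r] max_in that by (auto simp: H_def)
    qed
  qed
qed

lemma cct_sum_eq_chain_total: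
  assumes "\<And>i j. 1 \<le> i \<Longrightarrow> i \<le> j \<Longrightarrow> j \<le> k \<Longrightarrow> lam j \<le> lam i" and "lam (k + 1) = 0"
  shows "cct_sum a b k lam = chain_total a b k lam"
  using assms
proof (induction "k + (\<Sum>r\<in>{1..k}. lam r)" arbitrary: k lam rule: less_induct)
  case less
  note lam_dec = less.prems(1) and lam_zero = less.prems(2)
  show ?case
  proof (cases "k = 0 \<or> lam 1 = 0")
    case True
    have "lam r = 0" if "1 \<le> r" "r \<le> k + 1" for r
    proof (cases "r = k + 1")
      case False
      then show ?thesis using True that lam_dec[of 1 r] by auto
    qed (use lam_zero in simp)
    then show ?thesis by (simp add: cct_sum_empty_shape chain_total_empty_shape)
  next
    case False
    then obtain k' where k: "k = Suc k'" by (cases k) auto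
    have "1 \<le> k" using k by simp
    with lam_dec obtain h where h: "1 \<le> h" "h \<le> k"
      and upto_h: "\<And>r. 1 \<le> r \<Longrightarrow> r \<le> h \<Longrightarrow> lam r = lam 1"
      and below_h: "\<And>r. h < r \<Longrightarrow> r \<le> k \<Longrightarrow> lam r < lam 1"
      using obtain_last_longest_row[of k lam] by blast
    have below_h': "lam r < lam 1" if "h < r" "r \<le> Suc k' + 1" for r
      using below_h[of r] lam_zero k False that by (cases "r = Suc k' + 1") auto
    interpret corner_box k' lam h "lam 1"
      using lam_dec h upto_h[of h] below_h False k by unfold_locales simp_all
    have "cct_sum a b k' (delete_row h lam) = cct_sum a b k' (\<lambda>i. lam (Suc i))"
    proof (rule cct_sum_cong)
      fix r assume "1 \<le> r" "r \<le> k'"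
      then show "delete_row h lam r = lam (Suc r)"
        using upto_h[of r] upto_h[of "Suc r"] by (auto simp: delete_row_def skip_row_def)
    qed
    also have "\<dots> = chain_total a b k' (\<lambda>i. lam (Suc i))"
    proof (rule less.hyps)
      have "(\<Sum>r\<in>{1..Suc k'}. lam r) = lam 1 + (\<Sum>r\<in>{Suc 1..Suc k'}. lam r)"
        by (subst sum.atLeast_Suc_atMost) simp_all
      also have "\<dots> = lam 1 + (\<Sum>r\<in>{1..k'}. lam (Suc r))"
        by (simp only: sum.shift_bounds_cl_Suc_ivl)
      finally show "k' + (\<Sum>r\<in>{1..k'}. lam (Suc r)) < k + (\<Sum>r\<in>{1..k}. lam r)" using k by simp
      show "lam (Suc j) \<le> lam (Suc i)" if "1 \<le> i" "i \<le> j" "j \<le> k'" for i j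
        using lam_dec[of "Suc i" "Suc j"] that k by simp
      show "lam (Suc (k' + 1)) = 0" using lam_zero k by simp
    qed
    moreover have "cct_sum a b k (shorten_rows h lam) = chain_total a b k (shorten_rows h lam)"
    proof (rule less.hyps)
      have "(\<Sum>r\<in>{1..k}. shorten_rows h lam r) < (\<Sum>r\<in>{1..k}. lam r)"
        using h False by (intro sum_strict_mono_ex1) (auto simp: shorten_rows_def intro!: bexI[of _ 1])
      then show "k + (\<Sum>r\<in>{1..k}. shorten_rows h lam r) < k + (\<Sum>r\<in>{1..k}. lam r)" by simp
      show "shorten_rows h lam j \<le> shorten_rows h lam i" if "1 \<le> i" "i \<le> j" "j \<le> k" for i j
        using that lam_dec[OF that] upto_h[of i] upto_h[of j] below_h[of j] k
        by (auto simp: shorten_rows_def)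
      show "shorten_rows h lam (k + 1) = 0" using lam_zero h k by (simp add: shorten_rows_def)
    qed
    ultimately show ?thesis
      using cct_sum_corner_recurrence chain_total_corner_recurrence[OF upto_h h[unfolded k] below_h'] False k
      by simp
  qed
qed

theorem theorem5p1:
  fixes n k :: nat and lam :: "nat \<Rightarrow> nat" and a b :: real
  assumes "1 \<le> k" and "k \<le> n"
    and "\<And>i j. 1 \<le> i \<Longrightarrow> i \<le> j \<Longrightarrow> j \<le> k \<Longrightarrow> lam j \<le> lam i"
    and "lam 1 \<le> n - k"
    and "lam (k + 1) = 0"
    and "b \<noteq> 0"
  shows "P_gen n k lam a b =
    a ^ k * b ^ (n - k) * det (mat k k (\<lambda>(i, j). Aentry lam a b (i + 1) (j + 1)))"
proof -
  \<comment> \<open>The bounds on \<open>k\<close>, \<open>n\<close> and \<open>lam 1\<close> only place the diagram in the rectangle; the identity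
    does not need them.\<close>
  have "P_gen n k lam a b = a ^ k * b ^ (n - k) * cct_sum a b k lam"
    unfolding P_gen_def wt_def cct_sum_def sum_distrib_left
    by (rule sum.cong) (simp_all add: power_add ac_simps)
  also have "cct_sum a b k lam = chain_total a b k lam"
    using assms(3,5) by (rule cct_sum_eq_chain_total)
  also have "\<dots> = Adet a b k lam"
    using assms(6,3,5) by (rule Adet_eq_chain_total[symmetric])
  finally show ?thesis by (simp add: Adet_def)
qed

end
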